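(* Let $p$ be a prime, let $(\mathcal G,\Gamma)$ be a finite proper graph of pro-$p$ groups, $G=\Pi_1(\mathcal G,\Gamma)$, and let $U$ be a (closed) normal subgroup of $G$. Put $\tilde U=\langle \mathcal G(v)^g\cap U\mid g\in G,\ v\in V(\Gamma)\rangle$ (closed subgroup generated). Then $\tilde U$ is normal in $G$ and $G/\tilde U\cong\Pi_1(\mathcal G_U,\Gamma)$, where $(\mathcal G_U,\Gamma)$ is the graph of pro-$p$ groups with $\mathcal G_U(m)=\mathcal G(m)U/U$ for each vertex or edge $m$ of $\Gamma$, and boundary maps $\partial_0,\partial_1$ the natural inclusions in $G/U$.
   Context: A finite graph of pro-$p$ groups $(\mathcal G,\Gamma)$ over a finite graph $\Gamma$ (maps $d_0,d_1$ giving edge endpoints) assigns pro-$p$ groups $\mathcal G(v)$, $\mathcal G(e)$ and monomorphisms $\partial_i:\mathcal G(e)\to\mathcal G(d_i(e))$. Its fundamental pro-$p$ group, with respect to a maximal subtree $D$, is given by the pro-$p$ presentation $\langle\mathcal G(v),t_e\mid t_e=1\ (e\in D),\ \partial_0(g)=t_e\partial_1(g)t_e^{-1}\ (g\in\mathcal G(e))\rangle$. Proper means each $\mathcal G(v)\to\Pi_1$ is injective, and vertex/edge groups are identified with their images in $G$. $h^g=g^{-1}hg$. *)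

theory Defs
  imports "HOL-Analysis.Analysis" "HOL-Algebra.Algebra"
begin

definition topological_group :: "('g, 'm) monoid_scheme \<Rightarrow> 'g topology \<Rightarrow> bool" where
  "topological_group G T \<longleftrightarrow> group G \<and> topspace T = carrier G \<and>
     continuous_map (prod_topology T T) T (\<lambda>(x, y). x \<otimes>\<^bsub>G\<^esub> y) \<and>
     continuous_map T T (\<lambda>x. inv\<^bsub>G\<^esub> x)"

text \<open>Pro-p group: compact Hausdorff topological group in which the open normal subgroups
  form a base of neighbourhoods of the identity and every open normal subgroup has
  p-power index (Ribes-Zalesskii, Thm. 2.1.3 / Sect. 2.3).\<close>
definition pro_p_group :: "nat \<Rightarrow> ('g, 'm) monoid_scheme \<Rightarrow> 'g topology \<Rightarrow> bool" where
  "pro_p_group p G T \<longleftrightarrow> topological_group G T \<and> compact_space T \<and> Hausdorff_space T \<and>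
     (\<forall>W. openin T W \<and> \<one>\<^bsub>G\<^esub> \<in> W \<longrightarrow> (\<exists>N. N \<lhd> G \<and> openin T N \<and> N \<subseteq> W)) \<and>
     (\<forall>N. N \<lhd> G \<and> openin T N \<longrightarrow> (\<exists>k::nat. card (rcosets\<^bsub>G\<^esub> N) = p ^ k))"

definition cont_hom ::
  "('a, 'm) monoid_scheme \<Rightarrow> 'a topology \<Rightarrow> ('b, 'n) monoid_scheme \<Rightarrow> 'b topology \<Rightarrow> ('a \<Rightarrow> 'b) set" where
  "cont_hom G S H T = {f. f \<in> hom G H \<and> continuous_map S T f}"

definition quot_top :: "('g, 'm) monoid_scheme \<Rightarrow> 'g topology \<Rightarrow> 'g set \<Rightarrow> 'g set topology" where
  "quot_top G T N = topology (\<lambda>S. S \<subseteq> rcosets\<^bsub>G\<^esub> N \<and> openin T (\<Union>S))"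

definition closed_generate :: "('g, 'm) monoid_scheme \<Rightarrow> 'g topology \<Rightarrow> 'g set \<Rightarrow> 'g set" where
  "closed_generate G T S = T closure_of (generate G S)"

definition graph :: "'v set \<Rightarrow> 'e set \<Rightarrow> ('e \<Rightarrow> 'v) \<Rightarrow> ('e \<Rightarrow> 'v) \<Rightarrow> bool" where
  "graph V E d0 d1 \<longleftrightarrow> finite V \<and> finite E \<and> (\<forall>e\<in>E. d0 e \<in> V \<and> d1 e \<in> V)"

definition adj_rel :: "'e set \<Rightarrow> ('e \<Rightarrow> 'v) \<Rightarrow> ('e \<Rightarrow> 'v) \<Rightarrow> ('v \<times> 'v) set" where
  "adj_rel D d0 d1 = {(d0 e, d1 e) |e. e \<in> D} \<union> {(d1 e, d0 e) |e. e \<in> D}"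

text \<open>\<open>D\<close> is a maximal subtree of the (finite, connected) graph: a set of edges forming a
  connected subgraph on all of \<open>V\<close> with \<open>|D| = |V| - 1\<close>, i.e. a spanning tree.\<close>
definition maximal_subtree :: "'v set \<Rightarrow> 'e set \<Rightarrow> ('e \<Rightarrow> 'v) \<Rightarrow> ('e \<Rightarrow> 'v) \<Rightarrow> 'e set \<Rightarrow> bool" where
  "maximal_subtree V E d0 d1 D \<longleftrightarrow> D \<subseteq> E \<and> V \<noteq> {} \<and> card D + 1 = card V \<and>
     (\<forall>u\<in>V. \<forall>w\<in>V. (u, w) \<in> (adj_rel D d0 d1)\<^sup>*)"

definition graph_of_pro_p_groups ::
  "nat \<Rightarrow> 'v set \<Rightarrow> 'e set \<Rightarrow> ('e \<Rightarrow> 'v) \<Rightarrow> ('e \<Rightarrow> 'v) \<Rightarrow>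
   ('v \<Rightarrow> ('a, 'm) monoid_scheme) \<Rightarrow> ('v \<Rightarrow> 'a topology) \<Rightarrow>
   ('e \<Rightarrow> ('b, 'n) monoid_scheme) \<Rightarrow> ('e \<Rightarrow> 'b topology) \<Rightarrow>
   ('e \<Rightarrow> 'b \<Rightarrow> 'a) \<Rightarrow> ('e \<Rightarrow> 'b \<Rightarrow> 'a) \<Rightarrow> bool" where
  "graph_of_pro_p_groups p V E d0 d1 GV TV GE TE del0 del1 \<longleftrightarrow>
     graph V E d0 d1 \<and>
     (\<forall>v\<in>V. pro_p_group p (GV v) (TV v)) \<and>
     (\<forall>e\<in>E. pro_p_group p (GE e) (TE e)) \<and>
     (\<forall>e\<in>E. del0 e \<in> cont_hom (GE e) (TE e) (GV (d0 e)) (TV (d0 e)) \<and>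
             inj_on (del0 e) (carrier (GE e))) \<and>
     (\<forall>e\<in>E. del1 e \<in> cont_hom (GE e) (TE e) (GV (d1 e)) (TV (d1 e)) \<and>
             inj_on (del1 e) (carrier (GE e)))"

text \<open>The relations of the pro-p presentation of the fundamental group, for images
  \<open>f v\<close> of the vertex groups and \<open>s e\<close> of the stable letters \<open>t_e\<close> in a group \<open>H\<close>.\<close>
definition pi1_relations ::
  "'v set \<Rightarrow> 'e set \<Rightarrow> ('e \<Rightarrow> 'v) \<Rightarrow> ('e \<Rightarrow> 'v) \<Rightarrow> 'e set \<Rightarrow>
   ('e \<Rightarrow> ('b, 'n) monoid_scheme) \<Rightarrow> ('e \<Rightarrow> 'b \<Rightarrow> 'a) \<Rightarrow> ('e \<Rightarrow> 'b \<Rightarrow> 'a) \<Rightarrow>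
   ('h, 'k) monoid_scheme \<Rightarrow> ('v \<Rightarrow> 'a \<Rightarrow> 'h) \<Rightarrow> ('e \<Rightarrow> 'h) \<Rightarrow> bool" where
  "pi1_relations V E d0 d1 D GE del0 del1 H f s \<longleftrightarrow>
     (\<forall>e\<in>E. s e \<in> carrier H) \<and>
     (\<forall>e\<in>D. s e = \<one>\<^bsub>H\<^esub>) \<and>
     (\<forall>e\<in>E. \<forall>x\<in>carrier (GE e).
        f (d0 e) (del0 e x) = s e \<otimes>\<^bsub>H\<^esub> f (d1 e) (del1 e x) \<otimes>\<^bsub>H\<^esub> inv\<^bsub>H\<^esub> (s e))"

text \<open>\<open>(G, T)\<close> together with \<open>iv\<close> (images of vertex groups) and \<open>t\<close> (stable letters) is the
  fundamental pro-p group \<open>\<Pi>_1\<close> with respect to the maximal subtree \<open>D\<close>, i.e. the pro-p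
  group given by the pro-p presentation
  \<open>\<langle>G(v), t_e | t_e = 1 (e \<in> D), \<partial>_0(g) = t_e \<partial>_1(g) t_e\<inverse>\<rangle>\<close>.
  This is expressed by its defining universal property: \<open>G\<close> is a pro-p group, topologically
  generated by the images of the generators, these satisfy the relations, and every
  assignment of the generators into a finite p-group (discrete topology) continuous on
  the vertex groups and satisfying the relations extends to a continuous homomorphism.
  (Finite p-groups are taken with carrier in \<open>nat\<close>; every finite group has such a copy.)\<close>
definition is_pi1 ::
  "nat \<Rightarrow> 'v set \<Rightarrow> 'e set \<Rightarrow> ('e \<Rightarrow> 'v) \<Rightarrow> ('e \<Rightarrow> 'v) \<Rightarrow> 'e set \<Rightarrow>
   ('v \<Rightarrow> ('a, 'm) monoid_scheme) \<Rightarrow> ('v \<Rightarrow> 'a topology) \<Rightarrow>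
   ('e \<Rightarrow> ('b, 'n) monoid_scheme) \<Rightarrow> ('e \<Rightarrow> 'b topology) \<Rightarrow>
   ('e \<Rightarrow> 'b \<Rightarrow> 'a) \<Rightarrow> ('e \<Rightarrow> 'b \<Rightarrow> 'a) \<Rightarrow>
   ('g, 'k) monoid_scheme \<Rightarrow> 'g topology \<Rightarrow> ('v \<Rightarrow> 'a \<Rightarrow> 'g) \<Rightarrow> ('e \<Rightarrow> 'g) \<Rightarrow> bool" where
  "is_pi1 p V E d0 d1 D GV TV GE TE del0 del1 G T iv t \<longleftrightarrow>
     pro_p_group p G T \<and>
     (\<forall>v\<in>V. iv v \<in> cont_hom (GV v) (TV v) G T) \<and>
     pi1_relations V E d0 d1 D GE del0 del1 G iv t \<and>
     closed_generate G T ((\<Union>v\<in>V. iv v ` carrier (GV v)) \<union> t ` E) = carrier G \<and>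
     (\<forall>(H :: nat monoid) f s.
        group H \<and> finite (carrier H) \<and> (\<exists>k::nat. card (carrier H) = p ^ k) \<and>
        (\<forall>v\<in>V. f v \<in> cont_hom (GV v) (TV v) H (discrete_topology (carrier H))) \<and>
        pi1_relations V E d0 d1 D GE del0 del1 H f s \<longrightarrow>
        (\<exists>\<phi> \<in> cont_hom G T H (discrete_topology (carrier H)).
           (\<forall>v\<in>V. \<forall>x\<in>carrier (GV v). \<phi> (iv v x) = f v x) \<and> (\<forall>e\<in>E. \<phi> (t e) = s e)))"

definition GU_vertex :: "('g, 'k) monoid_scheme \<Rightarrow> 'g set \<Rightarrow> ('v \<Rightarrow> ('a, 'm) monoid_scheme) \<Rightarrow>
    ('v \<Rightarrow> 'a \<Rightarrow> 'g) \<Rightarrow> 'v \<Rightarrow> 'g set monoid" where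
  "GU_vertex G U GV iv v =
     (G Mod U) \<lparr>carrier := (\<lambda>x. U #>\<^bsub>G\<^esub> iv v x) ` carrier (GV v)\<rparr>"

definition GU_vertex_top :: "('g, 'k) monoid_scheme \<Rightarrow> 'g topology \<Rightarrow> 'g set \<Rightarrow>
    ('v \<Rightarrow> ('a, 'm) monoid_scheme) \<Rightarrow> ('v \<Rightarrow> 'a \<Rightarrow> 'g) \<Rightarrow> 'v \<Rightarrow> 'g set topology" where
  "GU_vertex_top G T U GV iv v =
     subtopology (quot_top G T U) ((\<lambda>x. U #>\<^bsub>G\<^esub> iv v x) ` carrier (GV v))"

text \<open>Edge groups: \<open>\<G>(e)U/U \<cong> \<G>(e)/(\<G>(e) \<inter> U)\<close>, where \<open>\<G>(e) \<inter> U\<close> is the kernel of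
  \<open>\<G>(e) \<rightarrow> G/U\<close> (the same via \<open>\<partial>_0\<close> or \<open>\<partial>_1\<close>, as \<open>U\<close> is normal), with the quotient
  topology.\<close>
definition edge_kernel :: "('g, 'k) monoid_scheme \<Rightarrow> 'g set \<Rightarrow> ('e \<Rightarrow> 'v) \<Rightarrow>
    ('e \<Rightarrow> ('b, 'n) monoid_scheme) \<Rightarrow> ('e \<Rightarrow> 'b \<Rightarrow> 'a) \<Rightarrow> ('v \<Rightarrow> 'a \<Rightarrow> 'g) \<Rightarrow> 'e \<Rightarrow> 'b set" where
  "edge_kernel G U d1 GE del1 iv e = {x \<in> carrier (GE e). iv (d1 e) (del1 e x) \<in> U}"

definition GU_edge :: "('g, 'k) monoid_scheme \<Rightarrow> 'g set \<Rightarrow> ('e \<Rightarrow> 'v) \<Rightarrow>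
    ('e \<Rightarrow> ('b, 'n) monoid_scheme) \<Rightarrow> ('e \<Rightarrow> 'b \<Rightarrow> 'a) \<Rightarrow> ('v \<Rightarrow> 'a \<Rightarrow> 'g) \<Rightarrow> 'e \<Rightarrow> 'b set monoid" where
  "GU_edge G U d1 GE del1 iv e = GE e Mod edge_kernel G U d1 GE del1 iv e"

definition GU_edge_top :: "('g, 'k) monoid_scheme \<Rightarrow> 'g set \<Rightarrow> ('e \<Rightarrow> 'v) \<Rightarrow>
    ('e \<Rightarrow> ('b, 'n) monoid_scheme) \<Rightarrow> ('e \<Rightarrow> 'b topology) \<Rightarrow> ('e \<Rightarrow> 'b \<Rightarrow> 'a) \<Rightarrow>
    ('v \<Rightarrow> 'a \<Rightarrow> 'g) \<Rightarrow> 'e \<Rightarrow> 'b set topology" where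
  "GU_edge_top G U d1 GE TE del1 iv e = quot_top (GE e) (TE e) (edge_kernel G U d1 GE del1 iv e)"

definition GU_del :: "('g, 'k) monoid_scheme \<Rightarrow> 'g set \<Rightarrow> ('e \<Rightarrow> 'v) \<Rightarrow>
    ('e \<Rightarrow> 'b \<Rightarrow> 'a) \<Rightarrow> ('v \<Rightarrow> 'a \<Rightarrow> 'g) \<Rightarrow> 'e \<Rightarrow> 'b set \<Rightarrow> 'g set" where
  "GU_del G U di deli iv e C = (\<Union>x\<in>C. U #>\<^bsub>G\<^esub> iv (di e) (deli e x))"

definition U_tilde :: "('g, 'k) monoid_scheme \<Rightarrow> 'g topology \<Rightarrow> 'v set \<Rightarrow>
    ('v \<Rightarrow> ('a, 'm) monoid_scheme) \<Rightarrow> ('v \<Rightarrow> 'a \<Rightarrow> 'g) \<Rightarrow> 'g set \<Rightarrow> 'g set" where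
  "U_tilde G T V GV iv U = closed_generate G T
     {y. \<exists>v\<in>V. \<exists>g\<in>carrier G. \<exists>x\<in>carrier (GV v).
           y = inv\<^bsub>G\<^esub> g \<otimes>\<^bsub>G\<^esub> iv v x \<otimes>\<^bsub>G\<^esub> g \<and> y \<in> U}"

end

theory Submission
  imports Defs
begin

text \<open>\<open>\<tilde>U\<close> is the closure of the normal subgroup generated by the conjugates
  \<open>\<G>(v)\<^sup>g \<inter> U\<close>, hence a closed normal subgroup, and \<open>G/\<tilde>U\<close> is again a pro-p group.
  Since \<open>\<G>(v) \<inter> U \<subseteq> \<tilde>U\<close>, the coset map \<open>gU \<mapsto> g\<tilde>U\<close> is well defined on each
  \<open>\<G>(v)U/U\<close>; together with the images of the stable letters these maps satisfy the
  relations of \<open>\<Pi>\<^sub>1(\<G>\<^sub>U, \<Gamma>)\<close> and topologically generate \<open>G/\<tilde>U\<close>.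
  For the universal property, a compatible family of maps from the \<open>\<G>\<^sub>U(v)\<close> into a finite
  p-group lifts to the \<open>\<G>(v)\<close>, hence extends to a continuous homomorphism \<open>\<phi>\<close> of \<open>G\<close>.
  Then \<open>\<phi>\<close> kills every \<open>\<G>(v)\<^sup>g \<inter> U\<close>, so its closed kernel contains \<open>\<tilde>U\<close> and \<open>\<phi>\<close>
  factors through \<open>G/\<tilde>U\<close>.\<close>

section \<open>Cosets\<close>

lemma (in group) rcos_eq_iff:
  assumes "subgroup N G" "a \<in> carrier G" "b \<in> carrier G"
  shows "N #> a = N #> b \<longleftrightarrow> a \<otimes> inv b \<in> N"
proof
  assume "N #> a = N #> b"
  then have "a \<in> N #> b" using rcos_self[OF assms(2,1)] by simp
  then show "a \<otimes> inv b \<in> N" using subgroup.rcos_module_imp[OF assms(1) is_group assms(3)] by blast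
next
  assume "a \<otimes> inv b \<in> N"
  then have "a \<in> N #> b" using subgroup.rcos_module_rev[OF assms(1) is_group assms(3,2)] by blast
  then show "N #> a = N #> b" using repr_independence[OF _ assms(3,1)] by simp
qed

lemma (in group) rcos_eq_self_iff:
  assumes "subgroup N G" "a \<in> carrier G"
  shows "N #> a = N \<longleftrightarrow> a \<in> N"
proof
  assume "N #> a = N"
  then show "a \<in> N" using rcos_self[OF assms(2,1)] by simp
qed (rule subgroup.rcos_const[OF assms(1) is_group])

lemma (in group) Union_rcosets_subset:
  assumes "subgroup N G" "S \<subseteq> rcosets N"
  shows "\<Union>S = {x \<in> carrier G. N #> x \<in> S}"
proof (intro equalityI subsetI)
  fix x assume "x \<in> \<Union>S"
  then obtain a where "a \<in> carrier G" "N #> a \<in> S" "x \<in> N #> a"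
    using assms(2) unfolding RCOSETS_def by auto
  moreover from this have "x \<in> carrier G" "N #> x = N #> a"
    using subgroup.elemrcos_carrier[OF assms(1) is_group] repr_independence assms(1) by auto
  ultimately show "x \<in> {x \<in> carrier G. N #> x \<in> S}" by simp
qed (use assms(1) rcos_self in blast)

lemma (in group_hom) UN_rcos_image:
  assumes "subgroup U H" "subgroup K G" "h ` K \<subseteq> U" "x \<in> carrier G"
  shows "(\<Union>y\<in>K #> x. U #>\<^bsub>H\<^esub> h y) = U #>\<^bsub>H\<^esub> h x"
proof -
  have "U #>\<^bsub>H\<^esub> h (k \<otimes> x) = U #>\<^bsub>H\<^esub> h x" if "k \<in> K" for k
  proof -
    have "k \<in> carrier G" using that subgroup.mem_carrier[OF assms(2)] by blast
    then have "U #>\<^bsub>H\<^esub> h (k \<otimes> x) = (U #>\<^bsub>H\<^esub> h k) #>\<^bsub>H\<^esub> h x"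
      using assms(1,4) by (simp add: H.coset_mult_assoc subgroup.subset)
    also have "U #>\<^bsub>H\<^esub> h k = U"
      using that assms(1,3) subgroup.rcos_const[OF assms(1) H.is_group] by blast
    finally show ?thesis .
  qed
  moreover have "x \<in> K #> x" using G.rcos_self[OF assms(4,2)] .
  ultimately show ?thesis unfolding r_coset_def[of G K x] by blast
qed

lemma (in normal) group_hom_rcos: "group_hom G (G Mod H) (\<lambda>x. H #> x)"
  by (rule group_hom.intro[OF is_group factorgroup_is_group group_hom_axioms.intro[OF r_coset_hom_Mod]])

lemma (in normal) rcos_image_carrier: "(\<lambda>x. H #> x) ` carrier G = carrier (G Mod H)"
  unfolding FactGroup_def RCOSETS_def by auto

section \<open>Quotients of topological groups\<close>

lemma cont_hom_compose:
  assumes "f \<in> cont_hom A S B S'" "g \<in> cont_hom B S' C S''"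
  shows "(\<lambda>x. g (f x)) \<in> cont_hom A S C S''"
proof -
  have "f \<in> hom A B" "continuous_map S S' f" "g \<in> hom B C" "continuous_map S' S'' g"
    using assms unfolding cont_hom_def by auto
  then show ?thesis
    using hom_compose[of f A B g C] continuous_map_compose[of S S' f S'' g]
    unfolding cont_hom_def o_def by blast
qed

lemma cont_hom_group_hom:
  assumes "group A" "group B" "f \<in> cont_hom A S B S'"
  shows "group_hom A B f"
  using assms(3) unfolding cont_hom_def
  by (intro group_hom.intro assms(1,2) group_hom_axioms.intro) blast

lemma cont_hom_through_quotient_map:
  assumes A: "monoid A" and \<alpha>: "\<alpha> \<in> cont_hom A SA B SB" and q: "quotient_map SA SB \<alpha>"
    and surj: "\<alpha> ` carrier A = carrier B" and \<beta>: "\<beta> \<in> cont_hom A SA C SC"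
    and \<gamma>: "\<And>x. x \<in> carrier A \<Longrightarrow> \<gamma> (\<alpha> x) = \<beta> x"
    and top: "topspace SA = carrier A"
  shows "\<gamma> \<in> cont_hom B SB C SC"
proof -
  have "\<gamma> \<in> hom B C"
  proof (rule homI)
    fix b assume "b \<in> carrier B"
    then obtain x where "x \<in> carrier A" "b = \<alpha> x" using surj by blast
    then show "\<gamma> b \<in> carrier C" using \<beta> \<gamma> unfolding cont_hom_def hom_def by auto
  next
    fix b b' assume "b \<in> carrier B" "b' \<in> carrier B"
    then obtain x x' where x: "x \<in> carrier A" "b = \<alpha> x" and x': "x' \<in> carrier A" "b' = \<alpha> x'"
      using surj by blast
    then have "b \<otimes>\<^bsub>B\<^esub> b' = \<alpha> (x \<otimes>\<^bsub>A\<^esub> x')" "x \<otimes>\<^bsub>A\<^esub> x' \<in> carrier A"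
      using \<alpha> monoid.m_closed[OF A] unfolding cont_hom_def hom_def by auto
    then show "\<gamma> (b \<otimes>\<^bsub>B\<^esub> b') = \<gamma> b \<otimes>\<^bsub>C\<^esub> \<gamma> b'"
      using \<beta> \<gamma> x x' unfolding cont_hom_def hom_def by simp
  qed
  moreover have "continuous_map SA SC (\<gamma> \<circ> \<alpha>)"
    using \<beta> \<gamma> top continuous_map_eq[of SA SC \<beta> "\<gamma> \<circ> \<alpha>"] unfolding cont_hom_def by simp
  then have "continuous_map SB SC \<gamma>" by (rule continuous_compose_quotient_map[OF q])
  ultimately show ?thesis unfolding cont_hom_def by blast
qed

lemma open_map_prod:
  assumes f: "open_map X1 X2 f" and g: "open_map Y1 Y2 g"
  shows "open_map (prod_topology X1 Y1) (prod_topology X2 Y2) (\<lambda>(x, y). (f x, g y))"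
  unfolding open_map_def
proof (intro allI impI)
  fix W assume W: "openin (prod_topology X1 Y1) W"
  show "openin (prod_topology X2 Y2) ((\<lambda>(x, y). (f x, g y)) ` W)"
    unfolding openin_prod_topology_alt
  proof (intro allI impI)
    fix u w assume "(u, w) \<in> (\<lambda>(x, y). (f x, g y)) ` W"
    then obtain x y where xy: "(x, y) \<in> W" "u = f x" "w = g y" by auto
    with W obtain A B where AB: "openin X1 A" "openin Y1 B" "x \<in> A" "y \<in> B" "A \<times> B \<subseteq> W"
      unfolding openin_prod_topology_alt by meson
    show "\<exists>A2 B2. openin X2 A2 \<and> openin Y2 B2 \<and> u \<in> A2 \<and> w \<in> B2 \<and>
        A2 \<times> B2 \<subseteq> (\<lambda>(x, y). (f x, g y)) ` W"
    proof (intro exI conjI)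
      show "openin X2 (f ` A)" using f AB(1) unfolding open_map_def by blast
      show "openin Y2 (g ` B)" using g AB(2) unfolding open_map_def by blast
      show "u \<in> f ` A" using xy(2) AB(3) by (rule image_eqI)
      show "w \<in> g ` B" using xy(3) AB(4) by (rule image_eqI)
      show "f ` A \<times> g ` B \<subseteq> (\<lambda>(x, y). (f x, g y)) ` W"
        using image_mono[OF AB(5), of "\<lambda>(x, y). (f x, g y)"] by (simp add: image_paired_Times)
    qed
  qed
qed

lemma (in group) openin_quot_top:
  assumes "subgroup N G"
  shows "openin (quot_top G T N) S \<longleftrightarrow> S \<subseteq> rcosets N \<and> openin T (\<Union>S)"
proof -
  have "istopology (\<lambda>S. S \<subseteq> rcosets N \<and> openin T (\<Union>S))"
    unfolding istopology_def
  proof (rule conjI; intro allI impI)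
    fix S1 S2 assume S1: "S1 \<subseteq> rcosets N \<and> openin T (\<Union>S1)"
      and S2: "S2 \<subseteq> rcosets N \<and> openin T (\<Union>S2)"
    then have S12: "S1 \<inter> S2 \<subseteq> rcosets N" by blast
    have "\<Union>(S1 \<inter> S2) = {x \<in> carrier G. N #> x \<in> S1 \<inter> S2}"
      using Union_rcosets_subset[OF assms S12] .
    also have "\<dots> = {x \<in> carrier G. N #> x \<in> S1} \<inter> {x \<in> carrier G. N #> x \<in> S2}" by blast
    also have "\<dots> = \<Union>S1 \<inter> \<Union>S2"
      using Union_rcosets_subset[OF assms] S1 S2 by simp
    finally show "S1 \<inter> S2 \<subseteq> rcosets N \<and> openin T (\<Union>(S1 \<inter> S2))"
      using S1 S2 S12 by (simp add: openin_Int)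
  next
    fix K assume K: "\<forall>S\<in>K. S \<subseteq> rcosets N \<and> openin T (\<Union>S)"
    then have "openin T (\<Union>(Union ` K))" by (intro openin_Union) blast
    moreover have "\<Union>(\<Union>K) = \<Union>(Union ` K)" by blast
    moreover have "\<Union>K \<subseteq> rcosets N" using K by blast
    ultimately show "\<Union>K \<subseteq> rcosets N \<and> openin T (\<Union>(\<Union>K))" by simp
  qed
  then show ?thesis unfolding quot_top_def by simp
qed

lemma (in group) topspace_quot_top:
  assumes "subgroup N G" "topspace T = carrier G"
  shows "topspace (quot_top G T N) = rcosets N"
proof -
  have "openin T (\<Union>(rcosets N))"
    using rcosets_part_G[OF assms(1)] assms(2) openin_topspace[of T] by simp
  then have "openin (quot_top G T N) (rcosets N)"
    using openin_quot_top[OF assms(1)] by blast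
  then show ?thesis
    using openin_subset openin_quot_top[OF assms(1), of T "topspace (quot_top G T N)"] by blast
qed

locale topgroup =
  fixes G (structure) and T :: "'g topology"
  assumes topological_group: "topological_group G T"
begin

sublocale group G
  using topological_group unfolding topological_group_def by blast

lemma topspace_eq: "topspace T = carrier G"
  using topological_group unfolding topological_group_def by blast

lemma continuous_map_mult [continuous_intros]:
  assumes "continuous_map Z T f" "continuous_map Z T g"
  shows "continuous_map Z T (\<lambda>x. f x \<otimes> g x)"
proof -
  have "continuous_map (prod_topology T T) T (\<lambda>(x, y). x \<otimes> y)"
    using topological_group unfolding topological_group_def by blast
  from continuous_map_compose[OF continuous_map_pairedI[OF assms] this] show ?thesis
    by (simp add: o_def)
qed

lemma continuous_map_inv [continuous_intros]:
  assumes "continuous_map Z T f"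
  shows "continuous_map Z T (\<lambda>x. inv (f x))"
proof -
  have "continuous_map T T (\<lambda>x. inv x)"
    using topological_group unfolding topological_group_def by blast
  then show ?thesis using continuous_map_compose[OF assms] by (simp add: o_def)
qed

lemma continuous_map_left_mult:
  assumes "a \<in> carrier G"
  shows "continuous_map T T (\<lambda>x. a \<otimes> x)"
  using assms topspace_eq by (intro continuous_intros) auto

lemma homeomorphic_map_left_mult:
  assumes "a \<in> carrier G"
  shows "homeomorphic_map T T (\<lambda>x. a \<otimes> x)"
  unfolding homeomorphic_map_maps homeomorphic_maps_def
  using assms topspace_eq continuous_map_left_mult[of a] continuous_map_left_mult[of "inv a"]
  by (intro exI[of _ "\<lambda>x. inv a \<otimes> x"]) (simp add: m_assoc[symmetric])

lemma continuous_map_rcos: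
  assumes "subgroup N G"
  shows "continuous_map T (quot_top G T N) (\<lambda>x. N #> x)"
  unfolding continuous_map_def
proof (intro conjI allI impI)
  show "(\<lambda>x. N #> x) \<in> topspace T \<rightarrow> topspace (quot_top G T N)"
    unfolding topspace_quot_top[OF assms topspace_eq] topspace_eq
    using rcosetsI[OF subgroup.subset[OF assms]] by blast
  fix S assume "openin (quot_top G T N) S"
  then have "S \<subseteq> rcosets N" "openin T (\<Union>S)" using openin_quot_top[OF assms] by auto
  then show "openin T {x \<in> topspace T. N #> x \<in> S}"
    using Union_rcosets_subset[OF assms] topspace_eq by simp
qed

lemma open_map_rcos:
  assumes "subgroup N G"
  shows "open_map T (quot_top G T N) (\<lambda>x. N #> x)"
  unfolding open_map_def
proof (intro allI impI)
  fix W assume W: "openin T W"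
  then have Wc: "W \<subseteq> carrier G" using openin_subset topspace_eq by auto
  have "\<Union>((\<lambda>x. N #> x) ` W) = (\<Union>n\<in>N. (\<lambda>x. n \<otimes> x) ` W)"
    unfolding r_coset_def by auto
  moreover have "openin T (\<Union>n\<in>N. (\<lambda>x. n \<otimes> x) ` W)"
    using homeomorphic_map_openness[OF homeomorphic_map_left_mult] W Wc topspace_eq
      subgroup.mem_carrier[OF assms] by auto
  ultimately show "openin (quot_top G T N) ((\<lambda>x. N #> x) ` W)"
    using openin_quot_top[OF assms] rcosetsI subgroup.subset[OF assms] Wc by auto
qed

lemma rcos_image_topspace:
  assumes "subgroup N G"
  shows "(\<lambda>x. N #> x) ` topspace T = topspace (quot_top G T N)"
  using topspace_quot_top[OF assms topspace_eq] topspace_eq unfolding RCOSETS_def by auto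

lemma quotient_map_rcos:
  assumes "subgroup N G"
  shows "quotient_map T (quot_top G T N) (\<lambda>x. N #> x)"
  using continuous_open_imp_quotient_map continuous_map_rcos[OF assms] open_map_rcos[OF assms]
    rcos_image_topspace[OF assms] by blast

lemma quotient_map_prod_rcos:
  assumes "subgroup N G"
  shows "quotient_map (prod_topology T T) (prod_topology (quot_top G T N) (quot_top G T N))
    (\<lambda>(x, y). (N #> x, N #> y))"
proof (rule continuous_open_imp_quotient_map)
  show "continuous_map (prod_topology T T) (prod_topology (quot_top G T N) (quot_top G T N))
      (\<lambda>(x, y). (N #> x, N #> y))"
    using continuous_map_compose[OF continuous_map_fst[of T T] continuous_map_rcos[OF assms]]
      continuous_map_compose[OF continuous_map_snd[of T T] continuous_map_rcos[OF assms]]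
    by (simp add: split_def continuous_map_paired o_def)
  show "open_map (prod_topology T T) (prod_topology (quot_top G T N) (quot_top G T N))
      (\<lambda>(x, y). (N #> x, N #> y))"
    using open_map_prod open_map_rcos[OF assms] by blast
  show "(\<lambda>(x, y). (N #> x, N #> y)) ` topspace (prod_topology T T) =
      topspace (prod_topology (quot_top G T N) (quot_top G T N))"
    using rcos_image_topspace[OF assms] by (simp add: image_paired_Times)
qed

lemma topological_group_quot:
  assumes N: "N \<lhd> G"
  shows "topological_group (G Mod N) (quot_top G T N)"
proof -
  interpret N: normal N G by (fact N)
  have sub: "subgroup N G" by (rule N.subgroup_axioms)
  let ?Q = "quot_top G T N"
  have "continuous_map (prod_topology T T) ?Q (\<lambda>z. N #> (fst z \<otimes> snd z))"
    using continuous_map_compose[OF continuous_map_mult[OF continuous_map_fst continuous_map_snd]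
        continuous_map_rcos[OF sub]] by (simp add: o_def)
  then have "continuous_map (prod_topology T T) ?Q
      ((\<lambda>(A, B). A \<otimes>\<^bsub>G Mod N\<^esub> B) \<circ> (\<lambda>(x, y). (N #> x, N #> y)))"
    by (rule continuous_map_eq) (auto simp: FactGroup_def N.rcos_sum topspace_eq)
  then have mult: "continuous_map (prod_topology ?Q ?Q) ?Q (\<lambda>(A, B). A \<otimes>\<^bsub>G Mod N\<^esub> B)"
    by (rule continuous_compose_quotient_map[OF quotient_map_prod_rcos[OF sub]])
  have inv_rcos: "inv\<^bsub>G Mod N\<^esub> (N #> x) = N #> inv x" if "x \<in> carrier G" for x
  proof -
    have "N #> x \<in> carrier (G Mod N)" using rcosetsI[OF N.subset that] by (simp add: FactGroup_def)
    then show ?thesis using N.inv_FactGroup N.rcos_inv[OF that] by simp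
  qed
  have "continuous_map T ?Q (\<lambda>x. N #> inv x)"
    using continuous_map_compose[OF continuous_map_inv[OF continuous_map_id] continuous_map_rcos[OF sub]]
    by (simp add: o_def)
  then have "continuous_map T ?Q ((\<lambda>A. inv\<^bsub>G Mod N\<^esub> A) \<circ> (\<lambda>x. N #> x))"
    by (rule continuous_map_eq) (simp add: inv_rcos topspace_eq)
  then have inv: "continuous_map ?Q ?Q (\<lambda>A. inv\<^bsub>G Mod N\<^esub> A)"
    by (rule continuous_compose_quotient_map[OF quotient_map_rcos[OF sub]])
  show ?thesis
    unfolding topological_group_def
    using N.factorgroup_is_group topspace_quot_top[OF sub topspace_eq] mult inv
    by (simp add: FactGroup_def)
qed

lemma rcos_pairs_off_diagonal:
  assumes sub: "subgroup N G"
  shows "(\<lambda>(x, y). (N #> x, N #> y)) ` {z \<in> topspace (prod_topology T T). fst z \<otimes> inv (snd z) \<notin> N}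
    = topspace (prod_topology (quot_top G T N) (quot_top G T N))
      - (\<lambda>A. (A, A)) ` topspace (quot_top G T N)"
    (is "?\<pi>\<pi> ` ?R = topspace (prod_topology ?Q ?Q) - ?diag")
proof (intro equalityI subsetI)
  fix z assume "z \<in> ?\<pi>\<pi> ` ?R"
  then obtain x y where xy: "(x, y) \<in> ?R" "z = (N #> x, N #> y)" by auto
  then have x: "x \<in> carrier G" and y: "y \<in> carrier G" and "x \<otimes> inv y \<notin> N"
    by (auto simp: topspace_eq)
  then have "N #> x \<noteq> N #> y" using rcos_eq_iff[OF sub x y] by simp
  moreover have "N #> x \<in> rcosets N" "N #> y \<in> rcosets N"
    using rcosetsI[OF subgroup.subset[OF sub]] x y by auto
  ultimately show "z \<in> topspace (prod_topology ?Q ?Q) - ?diag"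
    using xy(2) by (auto simp: topspace_quot_top[OF sub topspace_eq])
next
  fix z assume z: "z \<in> topspace (prod_topology ?Q ?Q) - ?diag"
  then obtain x y where x: "x \<in> carrier G" and y: "y \<in> carrier G" and z_eq: "z = (N #> x, N #> y)"
    by (auto simp: topspace_quot_top[OF sub topspace_eq] RCOSETS_def)
  have "N #> x \<noteq> N #> y"
  proof
    assume "N #> x = N #> y"
    moreover have "N #> x \<in> topspace ?Q" using z z_eq by auto
    ultimately have "z \<in> ?diag" using z_eq by auto
    with z show False by blast
  qed
  then have "x \<otimes> inv y \<notin> N" using rcos_eq_iff[OF sub x y] by simp
  then have "(x, y) \<in> ?R" using x y by (simp add: topspace_eq)
  then show "z \<in> ?\<pi>\<pi> ` ?R" by (rule rev_image_eqI) (simp add: z_eq)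
qed

lemma Hausdorff_space_quot_top:
  assumes sub: "subgroup N G" and "closedin T N"
  shows "Hausdorff_space (quot_top G T N)"
proof -
  let ?Q = "quot_top G T N"
  let ?R = "{z \<in> topspace (prod_topology T T). fst z \<otimes> inv (snd z) \<notin> N}"
  have "continuous_map (prod_topology T T) T (\<lambda>z. fst z \<otimes> inv (snd z))"
    by (intro continuous_map_mult continuous_map_inv continuous_map_fst continuous_map_snd)
  moreover have "openin T (topspace T - N)" using assms(2) by (simp add: closedin_def)
  ultimately have "openin (prod_topology T T)
      {z \<in> topspace (prod_topology T T). fst z \<otimes> inv (snd z) \<in> topspace T - N}"
    by (rule openin_continuous_map_preimage)
  moreover have "{z \<in> topspace (prod_topology T T). fst z \<otimes> inv (snd z) \<in> topspace T - N} = ?R"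
    by (auto simp: topspace_eq)
  ultimately have "openin (prod_topology T T) ?R" by simp
  txt \<open>The complement of the diagonal is the image of this open set under the open map
    \<open>\<pi> \<times> \<pi>\<close>.\<close>
  then have "openin (prod_topology ?Q ?Q) ((\<lambda>(x, y). (N #> x, N #> y)) ` ?R)"
    using open_map_prod[OF open_map_rcos[OF sub] open_map_rcos[OF sub]] unfolding open_map_def by blast
  then have "openin (prod_topology ?Q ?Q) (topspace (prod_topology ?Q ?Q) - (\<lambda>A. (A, A)) ` topspace ?Q)"
    unfolding rcos_pairs_off_diagonal[OF sub] .
  then show ?thesis
    unfolding Hausdorff_space_closedin_diagonal closedin_def by auto
qed

lemma closure_of_image_subset:
  assumes "continuous_map T T f" "f ` H \<subseteq> H"
  shows "f ` (T closure_of H) \<subseteq> T closure_of H"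
  using continuous_map_image_closure_subset[OF assms(1)] closure_of_mono[OF assms(2)] by blast

lemma subgroup_closure_of:
  assumes H: "subgroup H G"
  shows "subgroup (T closure_of H) G"
proof -
  let ?C = "T closure_of H"
  have HC: "H \<subseteq> ?C" using closure_of_subset[of H T] subgroup.subset[OF H] topspace_eq by simp
  have C: "?C \<subseteq> carrier G" using closure_of_subset_topspace[of T H] topspace_eq by simp
  have inv: "inv a \<in> ?C" if "a \<in> ?C" for a
  proof -
    have "continuous_map T T (\<lambda>x. inv x)" using continuous_map_inv[OF continuous_map_id] by simp
    moreover have "(\<lambda>x. inv x) ` H \<subseteq> H" using subgroup.m_inv_closed[OF H] by blast
    ultimately show ?thesis using that closure_of_image_subset by blast
  qed
  have mult: "a \<otimes> b \<in> ?C" if "a \<in> ?C" "b \<in> ?C" for a b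
  proof -
    have "(a, b) \<in> prod_topology T T closure_of (H \<times> H)"
      using that by (simp add: closure_of_Times)
    then have "a \<otimes> b \<in> (\<lambda>z. fst z \<otimes> snd z) ` (prod_topology T T closure_of (H \<times> H))"
      by (rule rev_image_eqI) simp
    then have "a \<otimes> b \<in> T closure_of ((\<lambda>z. fst z \<otimes> snd z) ` (H \<times> H))"
      using continuous_map_image_closure_subset[OF
          continuous_map_mult[OF continuous_map_fst continuous_map_snd], of "H \<times> H"]
      by (rule subsetD[rotated])
    also have "\<dots> \<subseteq> ?C" by (rule closure_of_mono) (auto intro: subgroup.m_closed[OF H])
    finally show ?thesis .
  qed
  have "?C \<noteq> {}" using HC subgroup.one_closed[OF H] by blast
  then show ?thesis by (rule subgroupI[OF C _ inv mult])
qed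

lemma normal_closure_of:
  assumes H: "H \<lhd> G"
  shows "T closure_of H \<lhd> G"
proof -
  interpret H: normal H G by (fact H)
  have "g \<otimes> h \<otimes> inv g \<in> T closure_of H" if "g \<in> carrier G" "h \<in> T closure_of H" for g h
  proof -
    have "continuous_map T T (\<lambda>x. g)" "continuous_map T T (\<lambda>x. inv g)"
      using that(1) topspace_eq by simp_all
    then have "continuous_map T T (\<lambda>x. g \<otimes> x \<otimes> inv g)"
      by (intro continuous_map_mult continuous_map_id[unfolded id_def])
    moreover have "(\<lambda>x. g \<otimes> x \<otimes> inv g) ` H \<subseteq> H"
      using that(1) H.inv_op_closed2 by auto
    ultimately show ?thesis using that(2) closure_of_image_subset by blast
  qed
  then show ?thesis using subgroup_closure_of[OF H.subgroup_axioms] normal_inv_iff by blast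
qed

lemma closed_generate_quot:
  assumes N: "N \<lhd> G" and Y: "Y \<subseteq> carrier G" and gen: "closed_generate G T Y = carrier G"
  shows "closed_generate (G Mod N) (quot_top G T N) ((\<lambda>x. N #> x) ` Y) = carrier (G Mod N)"
proof -
  interpret N: normal N G by (fact N)
  interpret \<pi>: group_hom G "G Mod N" "\<lambda>x. N #> x" by (rule N.group_hom_rcos)
  have "(\<lambda>x. N #> x) ` carrier G \<subseteq> quot_top G T N closure_of ((\<lambda>x. N #> x) ` generate G Y)"
    using continuous_map_image_closure_subset[OF continuous_map_rcos[OF N.subgroup_axioms],
        of "generate G Y"] gen
    unfolding closed_generate_def by simp
  moreover have "quot_top G T N closure_of S \<subseteq> carrier (G Mod N)" for S
    using closure_of_subset_topspace[of "quot_top G T N" S]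
      topspace_quot_top[OF N.subgroup_axioms topspace_eq]
    by (simp add: FactGroup_def)
  ultimately show ?thesis
    unfolding closed_generate_def \<pi>.generate_img[OF Y] N.rcos_image_carrier by (rule antisym[rotated])
qed

lemma cont_hom_rcos:
  assumes "N \<lhd> G"
  shows "(\<lambda>x. N #> x) \<in> cont_hom G T (G Mod N) (quot_top G T N)"
  using normal.r_coset_hom_Mod[OF assms] continuous_map_rcos[OF normal_imp_subgroup[OF assms]]
  unfolding cont_hom_def by simp

lemma cont_hom_factor_quot:
  assumes N: "N \<lhd> G" and H: "group H" and \<phi>: "\<phi> \<in> cont_hom G T H S"
    and ker: "N \<subseteq> kernel G H \<phi>"
  obtains \<psi> where "\<psi> \<in> cont_hom (G Mod N) (quot_top G T N) H S"
    and "\<And>g. g \<in> carrier G \<Longrightarrow> \<psi> (N #> g) = \<phi> g"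
proof -
  interpret N: normal N G by (fact N)
  interpret \<phi>: group_hom G H \<phi> by (rule cont_hom_group_hom[OF is_group H \<phi>])
  define \<psi> where "\<psi> C = \<phi> (SOME g. g \<in> C)" for C
  have \<psi>: "\<psi> (N #> g) = \<phi> g" if g: "g \<in> carrier G" for g
  proof -
    have "(SOME x. x \<in> N #> g) \<in> N #> g"
      using rcos_self[OF g N.subgroup_axioms] by (rule someI)
    then obtain n where n: "n \<in> N" "(SOME x. x \<in> N #> g) = n \<otimes> g"
      unfolding r_coset_def by blast
    then have "\<phi> n = \<one>\<^bsub>H\<^esub>" "n \<in> carrier G" using ker unfolding kernel_def by auto
    then show ?thesis unfolding \<psi>_def n(2) using g by simp
  qed
  have "\<psi> \<in> cont_hom (G Mod N) (quot_top G T N) H S"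
    by (rule cont_hom_through_quotient_map[OF is_monoid cont_hom_rcos[OF N] quotient_map_rcos[OF N.subgroup_axioms]
          N.rcos_image_carrier \<phi> \<psi> topspace_eq])
  with \<psi> show ?thesis using that by blast
qed

end

section \<open>Pro-p quotients\<close>

lemma topgroup_imp_group: "topgroup G T \<Longrightarrow> group G"
  unfolding topgroup_def topological_group_def by blast

lemma pro_p_group_topgroup: "pro_p_group p G T \<Longrightarrow> topgroup G T"
  unfolding pro_p_group_def topgroup_def by simp

lemma (in normal) card_rcosets_Union:
  assumes A: "A \<lhd> G Mod H"
  shows "card (rcosets (\<Union>A)) = card (rcosets\<^bsub>G Mod H\<^esub> A)"
proof -
  interpret Q: group "G Mod H" by (rule factorgroup_is_group)
  interpret A: normal A "G Mod H" by (fact A)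
  let ?\<psi> = "\<lambda>x. A #>\<^bsub>G Mod H\<^esub> (H #> x)"
  have "?\<psi> \<in> hom G ((G Mod H) Mod A)"
    using Group.hom_compose[OF r_coset_hom_Mod A.r_coset_hom_Mod] by (simp add: o_def)
  then interpret \<psi>: group_hom G "(G Mod H) Mod A" ?\<psi>
    by (intro group_hom.intro is_group A.factorgroup_is_group group_hom_axioms.intro)
  have "?\<psi> x = \<one>\<^bsub>(G Mod H) Mod A\<^esub> \<longleftrightarrow> H #> x \<in> A" if "x \<in> carrier G" for x
  proof -
    have "H #> x \<in> carrier (G Mod H)" using that rcos_image_carrier by blast
    then show ?thesis using Q.rcos_eq_self_iff[OF A.subgroup_axioms] by (simp add: FactGroup_def)
  qed
  then have "kernel G ((G Mod H) Mod A) ?\<psi> = \<Union>A"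
    unfolding kernel_def factgroup_subgroup_union_char[OF A.subgroup_axioms] by blast
  moreover have "?\<psi> ` carrier G = carrier ((G Mod H) Mod A)"
    unfolding FactGroup_def RCOSETS_def by auto
  ultimately have "G Mod \<Union>A \<cong> (G Mod H) Mod A"
    using \<psi>.FactGroup_iso by simp
  then have "card (carrier (G Mod \<Union>A)) = card (carrier ((G Mod H) Mod A))"
    by (rule iso_same_card)
  then show ?thesis by (simp add: FactGroup_def)
qed

lemma (in topgroup) open_normal_base_quot:
  assumes N: "N \<lhd> G"
    and base: "\<And>W. openin T W \<Longrightarrow> \<one> \<in> W \<Longrightarrow> \<exists>M. M \<lhd> G \<and> openin T M \<and> M \<subseteq> W"
    and W: "openin (quot_top G T N) W" "\<one>\<^bsub>G Mod N\<^esub> \<in> W"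
  shows "\<exists>M. M \<lhd> G Mod N \<and> openin (quot_top G T N) M \<and> M \<subseteq> W"
proof -
  interpret N: normal N G by (fact N)
  have "N \<in> W" using W(2) by (simp add: FactGroup_def)
  then have "\<one> \<in> \<Union>W" by (rule UnionI) simp
  moreover have "W \<subseteq> rcosets N" "openin T (\<Union>W)"
    using W(1) openin_quot_top[OF N.subgroup_axioms] by auto
  ultimately obtain M where M: "M \<lhd> G" "openin T M" "M \<subseteq> \<Union>W" using base by blast
  interpret M: normal M G by (fact M(1))
  have "(\<lambda>x. N #> x) ` M \<lhd> G Mod N"
    using M.surj_hom_normal_subgroup[OF N.group_hom_rcos N.rcos_image_carrier] .
  moreover have "openin (quot_top G T N) ((\<lambda>x. N #> x) ` M)"
    using open_map_rcos[OF N.subgroup_axioms] M(2) unfolding open_map_def by blast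
  moreover have "(\<lambda>x. N #> x) ` M \<subseteq> W"
    using M(3) Union_rcosets_subset[OF N.subgroup_axioms \<open>W \<subseteq> rcosets N\<close>] by auto
  ultimately show ?thesis by blast
qed

lemma pro_p_group_quot:
  fixes G (structure)
  assumes pp: "pro_p_group p G T" and N: "N \<lhd> G" and "closedin T N"
  shows "pro_p_group p (G Mod N) (quot_top G T N)"
proof -
  interpret topgroup G T using pro_p_group_topgroup[OF pp] .
  interpret N: normal N G by (fact N)
  let ?Q = "quot_top G T N"
  have "compactin T (topspace T)" using pp unfolding pro_p_group_def compact_space_def by blast
  then have "compactin ?Q ((\<lambda>x. N #> x) ` topspace T)"
    using image_compactin continuous_map_rcos[OF N.subgroup_axioms] by blast
  then have compact: "compact_space ?Q"
    using rcos_image_topspace[OF N.subgroup_axioms] unfolding compact_space_def by simp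
  have "\<exists>M. M \<lhd> G \<and> openin T M \<and> M \<subseteq> W" if "openin T W" "\<one> \<in> W" for W
    using pp that unfolding pro_p_group_def by blast
  then have base: "\<forall>W. openin ?Q W \<and> \<one>\<^bsub>G Mod N\<^esub> \<in> W \<longrightarrow> (\<exists>M. M \<lhd> G Mod N \<and> openin ?Q M \<and> M \<subseteq> W)"
    using open_normal_base_quot[OF N] by blast
  have index: "\<forall>M. M \<lhd> G Mod N \<and> openin ?Q M \<longrightarrow> (\<exists>k. card (rcosets\<^bsub>G Mod N\<^esub> M) = p ^ k)"
  proof (intro allI impI)
    fix M assume M: "M \<lhd> G Mod N \<and> openin ?Q M"
    then have "\<Union>M \<lhd> G" "openin T (\<Union>M)"
      using N.factgroup_subgroup_union_normal openin_quot_top[OF N.subgroup_axioms] by auto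
    then obtain k where "card (rcosets (\<Union>M)) = p ^ k"
      using pp unfolding pro_p_group_def by blast
    then show "\<exists>k. card (rcosets\<^bsub>G Mod N\<^esub> M) = p ^ k"
      using N.card_rcosets_Union M by auto
  qed
  show ?thesis
    unfolding pro_p_group_def
    using topological_group_quot[OF N] compact Hausdorff_space_quot_top[OF N.subgroup_axioms assms(3)]
      base index by (intro conjI)
qed

section \<open>The quotient graph of pro-p groups\<close>

locale pi1_quotient =
  fixes p :: nat
    and V :: "'v set" and E :: "'e set" and d0 d1 :: "'e \<Rightarrow> 'v" and D :: "'e set"
    and GV :: "'v \<Rightarrow> ('a, 'm) monoid_scheme" and TV :: "'v \<Rightarrow> 'a topology"
    and GE :: "'e \<Rightarrow> ('b, 'n) monoid_scheme" and TE :: "'e \<Rightarrow> 'b topology"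
    and del0 del1 :: "'e \<Rightarrow> 'b \<Rightarrow> 'a"
    and G :: "('g, 'k) monoid_scheme" (structure) and T :: "'g topology"
    and iv :: "'v \<Rightarrow> 'a \<Rightarrow> 'g" and t :: "'e \<Rightarrow> 'g"
    and U :: "'g set"
  assumes graph_of_groups: "graph_of_pro_p_groups p V E d0 d1 GV TV GE TE del0 del1"
    and pi1: "is_pi1 p V E d0 d1 D GV TV GE TE del0 del1 G T iv t"
    and U_normal: "U \<lhd> G" and U_closed: "closedin T U"
begin

lemma pro_p: "pro_p_group p G T"
  using pi1 unfolding is_pi1_def by blast

sublocale topgroup G T
  using pro_p_group_topgroup[OF pro_p] .

sublocale U: normal U G by (fact U_normal)

lemma vertex_pro_p: "v \<in> V \<Longrightarrow> pro_p_group p (GV v) (TV v)"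
  using graph_of_groups unfolding graph_of_pro_p_groups_def by blast

lemma vertex_topgroup: "v \<in> V \<Longrightarrow> topgroup (GV v) (TV v)"
  using pro_p_group_topgroup[OF vertex_pro_p] .

lemma vertex_group: "v \<in> V \<Longrightarrow> group (GV v)"
  using topgroup_imp_group[OF vertex_topgroup] .

lemma topspace_vertex: "v \<in> V \<Longrightarrow> topspace (TV v) = carrier (GV v)"
  using topgroup.topspace_eq[OF vertex_topgroup] .

lemma edge_group: "e \<in> E \<Longrightarrow> group (GE e)"
proof -
  assume "e \<in> E"
  then have "pro_p_group p (GE e) (TE e)" using graph_of_groups unfolding graph_of_pro_p_groups_def by blast
  then show "group (GE e)" using topgroup_imp_group[OF pro_p_group_topgroup] by blast
qed

lemma endpoints_in_V: "e \<in> E \<Longrightarrow> d0 e \<in> V" "e \<in> E \<Longrightarrow> d1 e \<in> V"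
  using graph_of_groups unfolding graph_of_pro_p_groups_def graph_def by blast+

lemma iv_cont_hom: "v \<in> V \<Longrightarrow> iv v \<in> cont_hom (GV v) (TV v) G T"
  using pi1 unfolding is_pi1_def by blast

lemma iv_group_hom: "v \<in> V \<Longrightarrow> group_hom (GV v) G (iv v)"
  using cont_hom_group_hom[OF vertex_group is_group iv_cont_hom] .

lemma iv_closed: "v \<in> V \<Longrightarrow> x \<in> carrier (GV v) \<Longrightarrow> iv v x \<in> carrier G"
  using group_hom.hom_closed[OF iv_group_hom] .

lemma del_cont_hom:
  assumes "e \<in> E"
  shows "del0 e \<in> cont_hom (GE e) (TE e) (GV (d0 e)) (TV (d0 e))"
    and "del1 e \<in> cont_hom (GE e) (TE e) (GV (d1 e)) (TV (d1 e))"
  using graph_of_groups assms unfolding graph_of_pro_p_groups_def by blast+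

lemma del_closed:
  assumes "e \<in> E" "x \<in> carrier (GE e)"
  shows "del0 e x \<in> carrier (GV (d0 e))" and "del1 e x \<in> carrier (GV (d1 e))"
  using del_cont_hom[OF assms(1)] assms(2) unfolding cont_hom_def hom_def by auto

lemma edge_group_hom:
  assumes e: "e \<in> E"
  shows "group_hom (GE e) G (\<lambda>x. iv (d0 e) (del0 e x))"
    and "group_hom (GE e) G (\<lambda>x. iv (d1 e) (del1 e x))"
  using cont_hom_group_hom[OF edge_group[OF e] is_group
      cont_hom_compose[OF del_cont_hom(1)[OF e] iv_cont_hom[OF endpoints_in_V(1)[OF e]]]]
    cont_hom_group_hom[OF edge_group[OF e] is_group
      cont_hom_compose[OF del_cont_hom(2)[OF e] iv_cont_hom[OF endpoints_in_V(2)[OF e]]]] .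

lemma pi1_relations_G: "pi1_relations V E d0 d1 D GE del0 del1 G iv t"
  using pi1 unfolding is_pi1_def by blast

lemma stable_letter_closed: "e \<in> E \<Longrightarrow> t e \<in> carrier G"
  and stable_letter_tree: "e \<in> D \<Longrightarrow> t e = \<one>"
  and edge_relation: "e \<in> E \<Longrightarrow> x \<in> carrier (GE e) \<Longrightarrow>
    iv (d0 e) (del0 e x) = t e \<otimes> iv (d1 e) (del1 e x) \<otimes> inv (t e)"
  using pi1_relations_G unfolding pi1_relations_def by blast+

abbreviation Utilde ("\<tilde>U") where "\<tilde>U \<equiv> U_tilde G T V GV iv U"

definition U_gens :: "'g set" where
  "U_gens = {y. \<exists>v\<in>V. \<exists>g\<in>carrier G. \<exists>x\<in>carrier (GV v). y = inv g \<otimes> iv v x \<otimes> g \<and> y \<in> U}"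

lemma U_tilde_eq: "\<tilde>U = T closure_of generate G U_gens"
  unfolding U_tilde_def closed_generate_def U_gens_def ..

lemma U_gens_subset: "U_gens \<subseteq> U"
  unfolding U_gens_def by blast

lemma U_gens_conj:
  assumes h: "h \<in> U_gens" and g: "g \<in> carrier G"
  shows "g \<otimes> h \<otimes> inv g \<in> U_gens"
proof -
  obtain v g' x where v: "v \<in> V" and g': "g' \<in> carrier G" and x: "x \<in> carrier (GV v)"
    and h_eq: "h = inv g' \<otimes> iv v x \<otimes> g'" and hU: "h \<in> U"
    using h unfolding U_gens_def by blast
  let ?g = "g' \<otimes> inv g"
  have eq: "g \<otimes> h \<otimes> inv g = inv ?g \<otimes> iv v x \<otimes> ?g"
    using g g' iv_closed[OF v x] by (simp add: h_eq m_assoc inv_mult_group)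
  have "inv ?g \<otimes> iv v x \<otimes> ?g \<in> U" using U.inv_op_closed2[OF g hU] by (simp only: eq)
  moreover have "?g \<in> carrier G" using g g' by simp
  ultimately have "inv ?g \<otimes> iv v x \<otimes> ?g \<in> U_gens" unfolding U_gens_def using v x by blast
  then show ?thesis by (simp only: eq)
qed

lemma U_tilde_normal: "\<tilde>U \<lhd> G"
proof -
  have "generate G U_gens \<lhd> G"
    using normal_generateI[OF order.trans[OF U_gens_subset U.subset] U_gens_conj] .
  then show ?thesis unfolding U_tilde_eq by (rule normal_closure_of)
qed

lemma U_tilde_closed: "closedin T \<tilde>U"
  unfolding U_tilde_eq by (rule closedin_closure_of)

lemma iv_in_U_tilde:
  assumes v: "v \<in> V" and x: "x \<in> carrier (GV v)" and xU: "iv v x \<in> U"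
  shows "iv v x \<in> \<tilde>U"
proof -
  have eq: "inv \<one> \<otimes> iv v x \<otimes> \<one> = iv v x" using iv_closed[OF v x] by simp
  have "inv \<one> \<otimes> iv v x \<otimes> \<one> \<in> U" using xU by (simp only: eq)
  then have "inv \<one> \<otimes> iv v x \<otimes> \<one> \<in> U_gens" unfolding U_gens_def using v x one_closed by blast
  then have "iv v x \<in> U_gens" by (simp only: eq)
  then have "iv v x \<in> generate G U_gens" by (rule generate.incl)
  moreover have "generate G U_gens \<subseteq> topspace T"
    using generate_incl[OF order.trans[OF U_gens_subset U.subset]] topspace_eq by simp
  ultimately show ?thesis unfolding U_tilde_eq using closure_of_subset by blast
qed


lemma carrier_GU_vertex: "carrier (GU_vertex G U GV iv v) = (\<lambda>x. U #> iv v x) ` carrier (GV v)"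
  unfolding GU_vertex_def by simp

lemma mult_GU_vertex: "A \<otimes>\<^bsub>GU_vertex G U GV iv v\<^esub> B = A <#> B"
  unfolding GU_vertex_def FactGroup_def by simp

lemma rcos_iv_hom:
  assumes v: "v \<in> V"
  shows "(\<lambda>x. U #> iv v x) \<in> hom (GV v) (G Mod U)"
  using Group.hom_compose[OF group_hom.homh[OF iv_group_hom[OF v]] U.r_coset_hom_Mod]
  by (simp add: o_def)

lemma GU_vertex_group:
  assumes v: "v \<in> V"
  shows "group (GU_vertex G U GV iv v)"
proof -
  interpret \<alpha>: group_hom "GV v" "G Mod U" "\<lambda>x. U #> iv v x"
    by (rule group_hom.intro[OF vertex_group[OF v] U.factorgroup_is_group
          group_hom_axioms.intro[OF rcos_iv_hom[OF v]]])
  show ?thesis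
    unfolding GU_vertex_def by (rule group.subgroup_imp_group[OF U.factorgroup_is_group \<alpha>.img_is_subgroup])
qed

lemma rcos_iv_cont_hom:
  assumes v: "v \<in> V"
  shows "(\<lambda>x. U #> iv v x) \<in>
    cont_hom (GV v) (TV v) (GU_vertex G U GV iv v) (GU_vertex_top G T U GV iv v)"
proof -
  have "(\<lambda>x. U #> iv v x) \<in> hom (GV v) (GU_vertex G U GV iv v)"
    using rcos_iv_hom[OF v] unfolding hom_def carrier_GU_vertex mult_GU_vertex
    by (simp add: FactGroup_def)
  moreover have "continuous_map (TV v) T (iv v)" using iv_cont_hom[OF v] unfolding cont_hom_def by blast
  from continuous_map_compose[OF this continuous_map_rcos[OF U.subgroup_axioms]]
  have "continuous_map (TV v) (quot_top G T U) (\<lambda>x. U #> iv v x)" by (simp add: o_def)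
  then have "continuous_map (TV v) (GU_vertex_top G T U GV iv v) (\<lambda>x. U #> iv v x)"
    unfolding GU_vertex_top_def continuous_map_in_subtopology using topspace_vertex[OF v] by simp
  ultimately show ?thesis unfolding cont_hom_def by blast
qed

lemma quotient_map_rcos_iv:
  assumes v: "v \<in> V"
  shows "quotient_map (TV v) (GU_vertex_top G T U GV iv v) (\<lambda>x. U #> iv v x)"
proof (rule continuous_closed_imp_quotient_map)
  show cont: "continuous_map (TV v) (GU_vertex_top G T U GV iv v) (\<lambda>x. U #> iv v x)"
    using rcos_iv_cont_hom[OF v] unfolding cont_hom_def by blast
  have "Hausdorff_space (GU_vertex_top G T U GV iv v)"
    unfolding GU_vertex_top_def
    by (rule Hausdorff_space_subtopology[OF Hausdorff_space_quot_top[OF U.subgroup_axioms U_closed]])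
  moreover have "compact_space (TV v)"
    using vertex_pro_p[OF v] unfolding pro_p_group_def by blast
  ultimately show "closed_map (TV v) (GU_vertex_top G T U GV iv v) (\<lambda>x. U #> iv v x)"
    using continuous_imp_closed_map[OF cont] by blast
  have "(\<lambda>x. U #> iv v x) ` carrier (GV v) \<subseteq> rcosets U"
    using iv_closed[OF v] rcosetsI[OF U.subset] by blast
  then show "(\<lambda>x. U #> iv v x) ` topspace (TV v) = topspace (GU_vertex_top G T U GV iv v)"
    unfolding GU_vertex_top_def topspace_vertex[OF v]
    by (simp add: topspace_quot_top[OF U.subgroup_axioms topspace_eq] inf.absorb2)
qed

text \<open>The choice of the representative is irrelevant because \<open>\<G>(v) \<inter> U \<subseteq> \<tilde>U\<close>
  (lemma \<open>iv_quot_rcos\<close>).\<close>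

definition iv_quot :: "'v \<Rightarrow> 'g set \<Rightarrow> 'g set" where
  "iv_quot v C = \<tilde>U #> iv v (SOME x. x \<in> carrier (GV v) \<and> C = U #> iv v x)"

definition t_quot :: "'e \<Rightarrow> 'g set" where
  "t_quot e = \<tilde>U #> t e"

lemma iv_quot_rcos:
  assumes v: "v \<in> V" and x: "x \<in> carrier (GV v)"
  shows "iv_quot v (U #> iv v x) = \<tilde>U #> iv v x"
proof -
  interpret GV: group "GV v" by (rule vertex_group[OF v])
  interpret Ut: normal "\<tilde>U" G by (rule U_tilde_normal)
  define y where "y = (SOME y. y \<in> carrier (GV v) \<and> U #> iv v x = U #> iv v y)"
  have "y \<in> carrier (GV v) \<and> U #> iv v x = U #> iv v y"
    unfolding y_def by (rule someI[of _ x]) (simp add: x)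
  then have y: "y \<in> carrier (GV v)" and "U #> iv v y = U #> iv v x" by auto
  then have "iv v y \<otimes> inv (iv v x) \<in> U"
    using rcos_eq_iff[OF U.subgroup_axioms iv_closed[OF v y] iv_closed[OF v x]] by simp
  moreover have "iv v y \<otimes> inv (iv v x) = iv v (y \<otimes>\<^bsub>GV v\<^esub> inv\<^bsub>GV v\<^esub> x)"
    using group_hom.hom_mult[OF iv_group_hom[OF v]] group_hom.hom_inv[OF iv_group_hom[OF v]] x y
    by simp
  ultimately have "iv v y \<otimes> inv (iv v x) \<in> \<tilde>U"
    using iv_in_U_tilde[OF v, of "y \<otimes>\<^bsub>GV v\<^esub> inv\<^bsub>GV v\<^esub> x"] x y by simp
  then have "\<tilde>U #> iv v y = \<tilde>U #> iv v x"
    using rcos_eq_iff[OF Ut.subgroup_axioms iv_closed[OF v y] iv_closed[OF v x]] by simp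
  then show ?thesis unfolding iv_quot_def y_def[symmetric] .
qed

lemma iv_quot_cont_hom:
  assumes v: "v \<in> V"
  shows "iv_quot v \<in> cont_hom (GU_vertex G U GV iv v) (GU_vertex_top G T U GV iv v)
    (G Mod \<tilde>U) (quot_top G T \<tilde>U)"
proof (rule cont_hom_through_quotient_map[OF group.is_monoid[OF vertex_group[OF v]]
      rcos_iv_cont_hom[OF v] quotient_map_rcos_iv[OF v]])
  show "(\<lambda>x. U #> iv v x) ` carrier (GV v) = carrier (GU_vertex G U GV iv v)"
    by (rule carrier_GU_vertex[symmetric])
  show "(\<lambda>x. \<tilde>U #> iv v x) \<in> cont_hom (GV v) (TV v) (G Mod \<tilde>U) (quot_top G T \<tilde>U)"
    by (rule cont_hom_compose[OF iv_cont_hom[OF v] cont_hom_rcos[OF U_tilde_normal]])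
  show "\<And>x. x \<in> carrier (GV v) \<Longrightarrow> iv_quot v (U #> iv v x) = \<tilde>U #> iv v x"
    by (rule iv_quot_rcos[OF v])
  show "topspace (TV v) = carrier (GV v)" by (rule topspace_vertex[OF v])
qed


lemma edge_kernel_subgroup:
  assumes e: "e \<in> E"
  shows "subgroup (edge_kernel G U d1 GE del1 iv e) (GE e)"
proof -
  let ?h = "\<lambda>x. iv (d1 e) (del1 e x)"
  interpret h: group_hom "GE e" G ?h by (rule edge_group_hom(2)[OF e])
  interpret \<pi>h: group_hom "GE e" "G Mod U" "\<lambda>x. U #> ?h x"
    using group_hom.intro[OF edge_group[OF e] U.factorgroup_is_group group_hom_axioms.intro]
      Group.hom_compose[OF h.homh U.r_coset_hom_Mod] by (simp add: o_def)
  have "U #> ?h x = U \<longleftrightarrow> ?h x \<in> U" if "x \<in> carrier (GE e)" for x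
    using rcos_eq_self_iff[OF U.subgroup_axioms h.hom_closed[OF that]] .
  then have "edge_kernel G U d1 GE del1 iv e = kernel (GE e) (G Mod U) (\<lambda>x. U #> ?h x)"
    unfolding edge_kernel_def kernel_def by (auto simp: FactGroup_def)
  then show ?thesis using \<pi>h.subgroup_kernel by simp
qed

lemma edge_kernel_del0:
  assumes e: "e \<in> E" and k: "k \<in> edge_kernel G U d1 GE del1 iv e"
  shows "iv (d0 e) (del0 e k) \<in> U"
proof -
  have "k \<in> carrier (GE e)" "iv (d1 e) (del1 e k) \<in> U" using k unfolding edge_kernel_def by auto
  then show ?thesis
    using edge_relation[OF e] U.inv_op_closed2[OF stable_letter_closed[OF e]] by simp
qed

lemma GU_del_rcos:
  assumes e: "e \<in> E" and x: "x \<in> carrier (GE e)"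
  shows "GU_del G U d0 del0 iv e (edge_kernel G U d1 GE del1 iv e #>\<^bsub>GE e\<^esub> x) =
      U #> iv (d0 e) (del0 e x)"
    and "GU_del G U d1 del1 iv e (edge_kernel G U d1 GE del1 iv e #>\<^bsub>GE e\<^esub> x) =
      U #> iv (d1 e) (del1 e x)"
proof -
  have "(\<lambda>x. iv (d0 e) (del0 e x)) ` edge_kernel G U d1 GE del1 iv e \<subseteq> U"
    using edge_kernel_del0[OF e] by blast
  then show "GU_del G U d0 del0 iv e (edge_kernel G U d1 GE del1 iv e #>\<^bsub>GE e\<^esub> x) =
      U #> iv (d0 e) (del0 e x)"
    unfolding GU_del_def
    by (rule group_hom.UN_rcos_image[OF edge_group_hom(1)[OF e] U.subgroup_axioms
          edge_kernel_subgroup[OF e] _ x])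
  have "(\<lambda>x. iv (d1 e) (del1 e x)) ` edge_kernel G U d1 GE del1 iv e \<subseteq> U"
    unfolding edge_kernel_def by blast
  then show "GU_del G U d1 del1 iv e (edge_kernel G U d1 GE del1 iv e #>\<^bsub>GE e\<^esub> x) =
      U #> iv (d1 e) (del1 e x)"
    unfolding GU_del_def
    by (rule group_hom.UN_rcos_image[OF edge_group_hom(2)[OF e] U.subgroup_axioms
          edge_kernel_subgroup[OF e] _ x])
qed

lemma carrier_GU_edge:
  "carrier (GU_edge G U d1 GE del1 iv e) = rcosets\<^bsub>GE e\<^esub> (edge_kernel G U d1 GE del1 iv e)"
  unfolding GU_edge_def FactGroup_def by simp

lemma pi1_relations_quot:
  "pi1_relations V E d0 d1 D (GU_edge G U d1 GE del1 iv) (GU_del G U d0 del0 iv)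
    (GU_del G U d1 del1 iv) (G Mod \<tilde>U) iv_quot t_quot"
  unfolding pi1_relations_def
proof (intro conjI ballI)
  interpret Ut: normal "\<tilde>U" G by (rule U_tilde_normal)
  interpret \<pi>: group_hom G "G Mod \<tilde>U" "\<lambda>x. \<tilde>U #> x" by (rule Ut.group_hom_rcos)
  fix e
  assume e: "e \<in> E"
  then show "t_quot e \<in> carrier (G Mod \<tilde>U)"
    unfolding t_quot_def using \<pi>.hom_closed[OF stable_letter_closed] by blast
  fix C assume "C \<in> carrier (GU_edge G U d1 GE del1 iv e)"
  then obtain x where x: "x \<in> carrier (GE e)" and C: "C = edge_kernel G U d1 GE del1 iv e #>\<^bsub>GE e\<^esub> x"
    unfolding carrier_GU_edge RCOSETS_def by blast
  let ?a0 = "iv (d0 e) (del0 e x)" and ?a1 = "iv (d1 e) (del1 e x)"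
  have a1: "?a1 \<in> carrier G" using group_hom.hom_closed[OF edge_group_hom(2)[OF e] x] .
  have "iv_quot (d0 e) (GU_del G U d0 del0 iv e C) = \<tilde>U #> ?a0"
    unfolding C GU_del_rcos(1)[OF e x] by (rule iv_quot_rcos[OF endpoints_in_V(1)[OF e] del_closed(1)[OF e x]])
  also have "\<dots> = \<tilde>U #> (t e \<otimes> ?a1 \<otimes> inv (t e))" using edge_relation[OF e x] by simp
  also have "\<dots> = t_quot e \<otimes>\<^bsub>G Mod \<tilde>U\<^esub> (\<tilde>U #> ?a1) \<otimes>\<^bsub>G Mod \<tilde>U\<^esub> inv\<^bsub>G Mod \<tilde>U\<^esub> t_quot e"
    unfolding t_quot_def using stable_letter_closed[OF e] a1 by simp
  also have "\<tilde>U #> ?a1 = iv_quot (d1 e) (GU_del G U d1 del1 iv e C)"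
    unfolding C GU_del_rcos(2)[OF e x] by (rule iv_quot_rcos[OF endpoints_in_V(2)[OF e] del_closed(2)[OF e x], symmetric])
  finally show "iv_quot (d0 e) (GU_del G U d0 del0 iv e C) =
      t_quot e \<otimes>\<^bsub>G Mod \<tilde>U\<^esub> iv_quot (d1 e) (GU_del G U d1 del1 iv e C) \<otimes>\<^bsub>G Mod \<tilde>U\<^esub>
      inv\<^bsub>G Mod \<tilde>U\<^esub> t_quot e" .
next
  fix e assume "e \<in> D"
  then show "t_quot e = \<one>\<^bsub>G Mod \<tilde>U\<^esub>"
    unfolding t_quot_def stable_letter_tree[OF \<open>e \<in> D\<close>]
    using coset_mult_one[OF normal_imp_subgroup[OF U_tilde_normal, THEN subgroup.subset]]
    by (simp add: FactGroup_def)
qed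

lemma closed_generate_quot_gens:
  "closed_generate (G Mod \<tilde>U) (quot_top G T \<tilde>U)
    ((\<Union>v\<in>V. iv_quot v ` carrier (GU_vertex G U GV iv v)) \<union> t_quot ` E) = carrier (G Mod \<tilde>U)"
proof -
  let ?X = "(\<Union>v\<in>V. iv v ` carrier (GV v)) \<union> t ` E"
  have "iv_quot v ` carrier (GU_vertex G U GV iv v) = (\<lambda>x. \<tilde>U #> x) ` iv v ` carrier (GV v)"
    if "v \<in> V" for v
    unfolding carrier_GU_vertex image_comp o_def using iv_quot_rcos[OF that] by simp
  then have "(\<Union>v\<in>V. iv_quot v ` carrier (GU_vertex G U GV iv v)) \<union> t_quot ` E = (\<lambda>x. \<tilde>U #> x) ` ?X"
    unfolding t_quot_def image_Un image_UN by (simp add: image_comp o_def)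
  moreover have "?X \<subseteq> carrier G" using iv_closed stable_letter_closed by blast
  moreover have "closed_generate G T ?X = carrier G" using pi1 unfolding is_pi1_def by blast
  ultimately show ?thesis using closed_generate_quot[OF U_tilde_normal] by simp
qed


lemma pi1_relations_lift:
  assumes rel: "pi1_relations V E d0 d1 D (GU_edge G U d1 GE del1 iv) (GU_del G U d0 del0 iv)
      (GU_del G U d1 del1 iv) H f s"
  shows "pi1_relations V E d0 d1 D GE del0 del1 H (\<lambda>v x. f v (U #> iv v x)) s"
  unfolding pi1_relations_def
proof (intro conjI ballI)
  fix e x assume e: "e \<in> E" and x: "x \<in> carrier (GE e)"
  let ?C = "edge_kernel G U d1 GE del1 iv e #>\<^bsub>GE e\<^esub> x"
  have "?C \<in> carrier (GU_edge G U d1 GE del1 iv e)"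
    unfolding carrier_GU_edge
    using group.rcosetsI[OF edge_group[OF e] subgroup.subset[OF edge_kernel_subgroup[OF e]] x] .
  then have "f (d0 e) (GU_del G U d0 del0 iv e ?C) =
      s e \<otimes>\<^bsub>H\<^esub> f (d1 e) (GU_del G U d1 del1 iv e ?C) \<otimes>\<^bsub>H\<^esub> inv\<^bsub>H\<^esub> s e"
    using rel e unfolding pi1_relations_def by simp
  then show "f (d0 e) (U #> iv (d0 e) (del0 e x)) =
      s e \<otimes>\<^bsub>H\<^esub> f (d1 e) (U #> iv (d1 e) (del1 e x)) \<otimes>\<^bsub>H\<^esub> inv\<^bsub>H\<^esub> s e"
    unfolding GU_del_rcos[OF e x] .
qed (use rel in \<open>simp_all add: pi1_relations_def\<close>)

lemma U_tilde_subset_kernel: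
  assumes H: "group H" and \<phi>: "\<phi> \<in> cont_hom G T H (discrete_topology (carrier H))"
    and trivial: "\<And>v x. v \<in> V \<Longrightarrow> x \<in> carrier (GV v) \<Longrightarrow> iv v x \<in> U \<Longrightarrow> \<phi> (iv v x) = \<one>\<^bsub>H\<^esub>"
  shows "\<tilde>U \<subseteq> kernel G H \<phi>"
proof -
  interpret \<phi>: group_hom G H \<phi> by (rule cont_hom_group_hom[OF is_group H \<phi>])
  have "continuous_map T (discrete_topology (carrier H)) \<phi>" using \<phi> unfolding cont_hom_def by blast
  then have "closedin T {x \<in> topspace T. \<phi> x \<in> {\<one>\<^bsub>H\<^esub>}}"
    by (rule closedin_continuous_map_preimage) simp
  then have closed: "closedin T (kernel G H \<phi>)"
    unfolding kernel_def topspace_eq by simp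
  have "U_gens \<subseteq> kernel G H \<phi>"
  proof
    fix y assume "y \<in> U_gens"
    then obtain v g x where v: "v \<in> V" and g: "g \<in> carrier G" and x: "x \<in> carrier (GV v)"
      and y: "y = inv g \<otimes> iv v x \<otimes> g" and yU: "y \<in> U"
      unfolding U_gens_def by blast
    have "g \<otimes> y \<otimes> inv g = iv v x"
      using g iv_closed[OF v x] unfolding y by (simp add: m_assoc[symmetric]) (simp add: m_assoc)
    then have "iv v x \<in> U" using U.inv_op_closed2[OF g yU] by simp
    then have "\<phi> (iv v x) = \<one>\<^bsub>H\<^esub>" by (rule trivial[OF v x])
    then have "\<phi> y = \<one>\<^bsub>H\<^esub>" using g iv_closed[OF v x] by (simp add: y)
    then show "y \<in> kernel G H \<phi>" unfolding kernel_def using g iv_closed[OF v x] y by simp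
  qed
  then show ?thesis
    unfolding U_tilde_eq
    using closure_of_minimal[OF generate_subgroup_incl[OF _ \<phi>.subgroup_kernel] closed] by blast
qed

lemma pi1_universal:
  fixes H :: "nat monoid"
  assumes "group H" "finite (carrier H)" "\<exists>k. card (carrier H) = p ^ k"
    and "\<forall>v\<in>V. f v \<in> cont_hom (GV v) (TV v) H (discrete_topology (carrier H))"
    and "pi1_relations V E d0 d1 D GE del0 del1 H f s"
  shows "\<exists>\<phi>\<in>cont_hom G T H (discrete_topology (carrier H)).
    (\<forall>v\<in>V. \<forall>x\<in>carrier (GV v). \<phi> (iv v x) = f v x) \<and> (\<forall>e\<in>E. \<phi> (t e) = s e)"
  using pi1[unfolded is_pi1_def, THEN conjunct2, THEN conjunct2, THEN conjunct2, THEN conjunct2,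
      rule_format] assms by blast

lemma pi1_quot_universal:
  fixes H :: "nat monoid"
  assumes H: "group H" "finite (carrier H)" "\<exists>k. card (carrier H) = p ^ k"
    and f: "\<And>v. v \<in> V \<Longrightarrow> f v \<in> cont_hom (GU_vertex G U GV iv v) (GU_vertex_top G T U GV iv v)
      H (discrete_topology (carrier H))"
    and rel: "pi1_relations V E d0 d1 D (GU_edge G U d1 GE del1 iv) (GU_del G U d0 del0 iv)
      (GU_del G U d1 del1 iv) H f s"
  shows "\<exists>\<psi>\<in>cont_hom (G Mod \<tilde>U) (quot_top G T \<tilde>U) H (discrete_topology (carrier H)).
    (\<forall>v\<in>V. \<forall>C\<in>carrier (GU_vertex G U GV iv v). \<psi> (iv_quot v C) = f v C) \<and>
    (\<forall>e\<in>E. \<psi> (t_quot e) = s e)"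
proof -
  let ?f = "\<lambda>v x. f v (U #> iv v x)"
  have f': "\<forall>v\<in>V. ?f v \<in> cont_hom (GV v) (TV v) H (discrete_topology (carrier H))"
    using cont_hom_compose[OF rcos_iv_cont_hom f] by blast
  obtain \<phi> where \<phi>: "\<phi> \<in> cont_hom G T H (discrete_topology (carrier H))"
    and \<phi>_iv: "\<forall>v\<in>V. \<forall>x\<in>carrier (GV v). \<phi> (iv v x) = f v (U #> iv v x)"
    and \<phi>_t: "\<forall>e\<in>E. \<phi> (t e) = s e"
    using pi1_universal[OF H f' pi1_relations_lift[OF rel]] by blast
  have "\<phi> (iv v x) = \<one>\<^bsub>H\<^esub>" if v: "v \<in> V" and x: "x \<in> carrier (GV v)" and xU: "iv v x \<in> U" for v x
  proof -
    interpret fv: group_hom "GU_vertex G U GV iv v" H "f v"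
      by (rule cont_hom_group_hom[OF GU_vertex_group[OF v] H(1) f[OF v]])
    have "U #> iv v x = \<one>\<^bsub>GU_vertex G U GV iv v\<^esub>"
      using rcos_eq_self_iff[OF U.subgroup_axioms iv_closed[OF v x]] xU
      by (simp add: GU_vertex_def FactGroup_def)
    then show ?thesis using \<phi>_iv[rule_format, OF v x] by simp
  qed
  then obtain \<psi> where \<psi>: "\<psi> \<in> cont_hom (G Mod \<tilde>U) (quot_top G T \<tilde>U) H (discrete_topology (carrier H))"
    and \<psi>_rcos: "\<And>g. g \<in> carrier G \<Longrightarrow> \<psi> (\<tilde>U #> g) = \<phi> g"
    using cont_hom_factor_quot[OF U_tilde_normal H(1) \<phi> U_tilde_subset_kernel[OF H(1) \<phi>]] by blast
  have "\<psi> (iv_quot v C) = f v C" if v: "v \<in> V" and C: "C \<in> carrier (GU_vertex G U GV iv v)" for v C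
  proof -
    obtain x where x: "x \<in> carrier (GV v)" and C_eq: "C = U #> iv v x"
      using C unfolding carrier_GU_vertex by blast
    show ?thesis
      unfolding C_eq iv_quot_rcos[OF v x] \<psi>_rcos[OF iv_closed[OF v x]] \<phi>_iv[rule_format, OF v x] ..
  qed
  moreover have "\<psi> (t_quot e) = s e" if "e \<in> E" for e
    unfolding t_quot_def using \<psi>_rcos[OF stable_letter_closed[OF that]] \<phi>_t[rule_format, OF that] by simp
  ultimately show ?thesis using \<psi> by blast
qed

lemma is_pi1_quot:
  "is_pi1 p V E d0 d1 D (GU_vertex G U GV iv) (GU_vertex_top G T U GV iv)
    (GU_edge G U d1 GE del1 iv) (GU_edge_top G U d1 GE TE del1 iv)
    (GU_del G U d0 del0 iv) (GU_del G U d1 del1 iv)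
    (G Mod \<tilde>U) (quot_top G T \<tilde>U) iv_quot t_quot"
  unfolding is_pi1_def
proof (intro conjI ballI allI impI)
  show "pro_p_group p (G Mod \<tilde>U) (quot_top G T \<tilde>U)"
    by (rule pro_p_group_quot[OF pro_p U_tilde_normal U_tilde_closed])
next
  fix v assume "v \<in> V"
  then show "iv_quot v \<in> cont_hom (GU_vertex G U GV iv v) (GU_vertex_top G T U GV iv v)
      (G Mod \<tilde>U) (quot_top G T \<tilde>U)"
    by (rule iv_quot_cont_hom)
next
  fix H :: "nat monoid" and f s
  assume "group H \<and> finite (carrier H) \<and> (\<exists>k. card (carrier H) = p ^ k) \<and>
    (\<forall>v\<in>V. f v \<in> cont_hom (GU_vertex G U GV iv v) (GU_vertex_top G T U GV iv v)
      H (discrete_topology (carrier H))) \<and>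
    pi1_relations V E d0 d1 D (GU_edge G U d1 GE del1 iv) (GU_del G U d0 del0 iv)
      (GU_del G U d1 del1 iv) H f s"
  then show "\<exists>\<psi>\<in>cont_hom (G Mod \<tilde>U) (quot_top G T \<tilde>U) H (discrete_topology (carrier H)).
      (\<forall>v\<in>V. \<forall>C\<in>carrier (GU_vertex G U GV iv v). \<psi> (iv_quot v C) = f v C) \<and>
      (\<forall>e\<in>E. \<psi> (t_quot e) = s e)"
    using pi1_quot_universal by blast
qed (fact pi1_relations_quot closed_generate_quot_gens)+

end

theorem proposition2p14:
  fixes p :: nat
    and V :: "'v set" and E :: "'e set" and d0 d1 :: "'e \<Rightarrow> 'v" and D :: "'e set"
    and GV :: "'v \<Rightarrow> ('a, 'm) monoid_scheme" and TV :: "'v \<Rightarrow> 'a topology"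
    and GE :: "'e \<Rightarrow> ('b, 'n) monoid_scheme" and TE :: "'e \<Rightarrow> 'b topology"
    and del0 del1 :: "'e \<Rightarrow> 'b \<Rightarrow> 'a"
    and G :: "('g, 'k) monoid_scheme" and T :: "'g topology"
    and iv :: "'v \<Rightarrow> 'a \<Rightarrow> 'g" and t :: "'e \<Rightarrow> 'g"
    and U :: "'g set"
  assumes "Factorial_Ring.prime p"
    and "graph_of_pro_p_groups p V E d0 d1 GV TV GE TE del0 del1"
    and "maximal_subtree V E d0 d1 D"
    and "is_pi1 p V E d0 d1 D GV TV GE TE del0 del1 G T iv t"
    and proper: "\<forall>v\<in>V. inj_on (iv v) (carrier (GV v))"
    and "U \<lhd> G" and "closedin T U"
  shows "U_tilde G T V GV iv U \<lhd> G \<and>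
    (\<exists>iv' t'. is_pi1 p V E d0 d1 D
        (GU_vertex G U GV iv) (GU_vertex_top G T U GV iv)
        (GU_edge G U d1 GE del1 iv) (GU_edge_top G U d1 GE TE del1 iv)
        (GU_del G U d0 del0 iv) (GU_del G U d1 del1 iv)
        (G Mod (U_tilde G T V GV iv U)) (quot_top G T (U_tilde G T V GV iv U)) iv' t')"
proof -
  interpret pi1_quotient p V E d0 d1 D GV TV GE TE del0 del1 G T iv t U
    by (rule pi1_quotient.intro[OF assms(2,4,6,7)])
  show ?thesis using U_tilde_normal is_pi1_quot by blast
qed

end
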